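(* Let $n\ge 7$ with $3\nmid n$, $\zeta_n=e^{2\pi i/n}$, $K=\mathbb{Q}(\zeta_n)$, and let $J=\{0,1,3\}$ or $J=\{0,2,3\}$, written $J=\{j_1<j_2<j_3\}$. Let $G$ be the $3\times n$ matrix over $K$ with $G_{i,l}=\zeta_n^{j_i(l-1)}$ ($1\le i\le 3$, $1\le l\le n$). Let $P_{\mathrm{bad}}$ be the set of rational primes $p$ dividing $|N_{K/\mathbb{Q}}(\Delta)|$ for some non-zero determinant $\Delta$ of a $3\times 3$ submatrix of $G$. Let $p\notin P_{\mathrm{bad}}$ be a prime with $p\nmid n$, $\mathfrak{p}$ a prime ideal of $\mathbb{Z}[\zeta_n]$ lying above $p$, $\rho:\mathbb{Z}[\zeta_n]\to\mathbb{Z}[\zeta_n]/\mathfrak{p}\cong\mathbb{F}_{p^f}$ the reduction map ($f$ the multiplicative order of $p$ modulo $n$), and $\overline{G}=\rho(G)$. Then the code generated by $\overline{G}$ is a cyclic MDS code of length $n$ and dimension $3$ over $\mathbb{F}_{p^f}$ that is of non-RS type.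
   Context: A linear $[n,k]$ code is MDS if its minimum distance is $n-k+1$; cyclic means invariant under cyclic shift of coordinates. A code is of RS type if it is equivalent (change of generator matrix, column permutation, non-zero column scaling) to a generalized Reed–Solomon code with generator matrix $(v_j x_j^{i-1})$, $x_j$ distinct, $v_j\neq 0$; otherwise it is of non-RS type. $N_{K/\mathbb{Q}}$ is the field norm. *)

theory Defs
  imports Complex_Main "HOL-Library.Function_Algebras"
    "HOL-Computational_Algebra.Polynomial" "HOL-Number_Theory.Number_Theory" "HOL-Combinatorics.Permutations"
begin

definition zeta :: "nat \<Rightarrow> complex" where
  "zeta n = cis (2 * pi / real n)"

definition Zzeta :: "nat \<Rightarrow> complex set" where
  "Zzeta n = {poly (map_poly of_int g) (zeta n) | g :: int poly. True}"

text \<open>Matrix G with entries z^(j_i * l), rows i = 0,1,2, columns l = 0..n-1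
  (0-indexed version of zeta^(j_i (l-1))).\<close>
definition Gmat :: "nat list \<Rightarrow> 'b::comm_ring_1 \<Rightarrow> nat \<Rightarrow> nat \<Rightarrow> 'b" where
  "Gmat js z i l = z ^ (js ! i * l)"

definition det3 :: "(nat \<Rightarrow> nat \<Rightarrow> 'b::comm_ring_1) \<Rightarrow> 'b" where
  "det3 M = M 0 0 * (M 1 1 * M 2 2 - M 1 2 * M 2 1)
          - M 0 1 * (M 1 0 * M 2 2 - M 1 2 * M 2 0)
          + M 0 2 * (M 1 0 * M 2 1 - M 1 1 * M 2 0)"

definition minor3 :: "nat list \<Rightarrow> 'b::comm_ring_1 \<Rightarrow> nat \<Rightarrow> nat \<Rightarrow> nat \<Rightarrow> 'b" where
  "minor3 js z a b c = det3 (\<lambda>i k. Gmat js z i ([a, b, c] ! k))"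

text \<open>Field norm N_{K/Q} of the minor: product of its Galois conjugates
  sigma_k (zeta_n \<mapsto> zeta_n^k), k coprime to n.\<close>
definition minor_norm :: "nat \<Rightarrow> nat list \<Rightarrow> nat \<Rightarrow> nat \<Rightarrow> nat \<Rightarrow> complex" where
  "minor_norm n js a b c = (\<Prod>k\<in>{k. k < n \<and> coprime k n}. minor3 js (zeta n ^ k) a b c)"

definition P_bad :: "nat \<Rightarrow> nat list \<Rightarrow> nat set" where
  "P_bad n js = {p. prime p \<and> (\<exists>a b c. a < b \<and> b < c \<and> c < n \<and>
       minor3 js (zeta n) a b c \<noteq> 0 \<and>
       (\<exists>m::int. minor_norm n js a b c = of_int m \<and> int p dvd \<bar>m\<bar>))}"

section \<open>Linear codes (vectors of length n are functions nat => 'a vanishing outside {..<n})\<close>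

definition fscale :: "'a::field \<Rightarrow> (nat \<Rightarrow> 'a) \<Rightarrow> (nat \<Rightarrow> 'a)" where
  "fscale c v = (\<lambda>l. c * v l)"

definition gen_code :: "nat \<Rightarrow> nat \<Rightarrow> (nat \<Rightarrow> nat \<Rightarrow> 'a::field) \<Rightarrow> (nat \<Rightarrow> 'a) set" where
  "gen_code n k M = {(\<lambda>l. if l < n then (\<Sum>i<k. c i * M i l) else 0) | c. True}"

definition code_dim :: "(nat \<Rightarrow> 'a::field) set \<Rightarrow> nat" where
  "code_dim C = vector_space.dim (fscale :: 'a \<Rightarrow> _) C"

definition hweight :: "nat \<Rightarrow> (nat \<Rightarrow> 'a::zero) \<Rightarrow> nat" where
  "hweight n v = card {l. l < n \<and> v l \<noteq> 0}"

definition min_dist :: "nat \<Rightarrow> (nat \<Rightarrow> 'a::zero) set \<Rightarrow> nat" where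
  "min_dist n C = Min {hweight n v | v. v \<in> C \<and> v \<noteq> 0}"

definition is_MDS :: "nat \<Rightarrow> (nat \<Rightarrow> 'a::field) set \<Rightarrow> bool" where
  "is_MDS n C \<longleftrightarrow> min_dist n C = n - code_dim C + 1"

definition cshift :: "nat \<Rightarrow> (nat \<Rightarrow> 'a::zero) \<Rightarrow> (nat \<Rightarrow> 'a)" where
  "cshift n v = (\<lambda>l. if l < n then v ((l + n - 1) mod n) else 0)"

definition is_cyclic :: "nat \<Rightarrow> (nat \<Rightarrow> 'a::zero) set \<Rightarrow> bool" where
  "is_cyclic n C \<longleftrightarrow> (\<forall>v\<in>C. cshift n v \<in> C)"

text \<open>Equivalence of codes: column permutation and nonzero column scaling
  (change of generator matrix is built in, since codes are sets).\<close>
definition code_equiv :: "nat \<Rightarrow> (nat \<Rightarrow> 'a::field) set \<Rightarrow> (nat \<Rightarrow> 'a) set \<Rightarrow> bool" where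
  "code_equiv n C D \<longleftrightarrow> (\<exists>\<sigma> s. (\<sigma> permutes {..<n}) \<and> (\<forall>l<n. s l \<noteq> 0) \<and>
      D = (\<lambda>v. \<lambda>l. if l < n then s l * v (\<sigma> l) else 0) ` C)"

definition GRS :: "nat \<Rightarrow> nat \<Rightarrow> (nat \<Rightarrow> 'a::field) \<Rightarrow> (nat \<Rightarrow> 'a) \<Rightarrow> (nat \<Rightarrow> 'a) set" where
  "GRS n k x v = gen_code n k (\<lambda>i l. v l * x l ^ i)"

definition RS_type :: "nat \<Rightarrow> (nat \<Rightarrow> 'a::field) set \<Rightarrow> bool" where
  "RS_type n C \<longleftrightarrow> (\<exists>x v. inj_on x {..<n} \<and> (\<forall>l<n. v l \<noteq> 0) \<and>
      code_equiv n (GRS n (code_dim C) x v) C)"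

end

theory Submission
  imports Defs Jordan_Normal_Form.Char_Poly
begin

text \<open>Every \<open>3 \<times> 3\<close> minor of \<open>G\<close> is a Vandermonde determinant times \<open>x + y + z\<close>
  or \<open>xy + xz + yz\<close> at three \<open>n\<close>-th roots of unity \<open>x, y, z\<close>; this last factor vanishes
  only when \<open>x, y, z\<close> form an equilateral triangle, which needs \<open>3 dvd n\<close>.  The norm of a
  minor is an integer: the conjugates \<open>g(\<zeta>\<^sup>k)\<close>, \<open>k < n\<close>, are the eigenvalues of an
  integer circulant matrix, and sorting them by the order of \<open>\<zeta>\<^sup>k\<close> splits off the
  primitive ones by induction on the divisors of \<open>n\<close>.  As the minor divides its norm in
  \<open>\<int>[\<zeta>]\<close>, all minors survive reduction modulo a prime outside \<open>P_bad\<close>.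

  Three rows without a vanishing maximal minor generate an MDS code of dimension 3, and
  the code is cyclic since \<open>w\<^sup>n = 1\<close>.  It is not of RS type: the products of its rows are
  the six independent vectors \<open>(w\<^bsup>e l\<^esup>)\<^sub>l\<close>, \<open>e = js!a + js!b\<close>, whereas products of
  codewords of a three-dimensional GRS code span at most five dimensions.  Finally the
  residue field is generated over \<open>\<bbbF>\<^sub>p\<close> by the primitive \<open>n\<close>-th root of unity \<open>w\<close>, so
  it has \<open>p\<^bsup>ord n p\<^esup>\<close> elements.\<close>

section \<open>Roots of unity\<close>

lemma power_mod_eq_if_power_eq_1:
  assumes "(w :: 'a :: monoid_mult) ^ n = 1"
  shows "w ^ k = w ^ (k mod n)"
proof -
  have "w ^ k = (w ^ n) ^ (k div n) * w ^ (k mod n)"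
    by (simp flip: power_mult power_add)
  with assms show ?thesis by simp
qed

lemma power_eq_1_iff_dvd:
  assumes "(w :: 'a :: monoid_mult) ^ n = 1" "inj_on (\<lambda>k. w ^ k) {..<n}" "n > 0"
  shows "w ^ k = 1 \<longleftrightarrow> n dvd k"
proof -
  have "w ^ k = 1 \<longleftrightarrow> w ^ (k mod n) = w ^ 0"
    using power_mod_eq_if_power_eq_1[OF assms(1)] by simp
  also have "\<dots> \<longleftrightarrow> k mod n = 0"
    using inj_onD[OF assms(2), of "k mod n" 0] assms(3) by auto
  finally show ?thesis by auto
qed

lemma sum_powers_root_of_unity:
  assumes "(w :: 'a :: field) ^ n = 1" "w \<noteq> 1"
  shows "(\<Sum>i<n. w ^ i) = 0"
  using geometric_sum[of w n] assms by simp

lemma zeta_pow: "zeta n ^ k = cis (2 * pi * real k / real n)"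
  by (simp add: zeta_def DeMoivre mult_ac)

lemma norm_zeta_pow [simp]: "norm (zeta n ^ k) = 1"
  by (simp add: zeta_pow)

lemma zeta_pow_self: "n > 0 \<Longrightarrow> zeta n ^ n = 1"
  by (simp add: zeta_pow)

lemma inj_on_zeta_pow: "n > 0 \<Longrightarrow> inj_on (\<lambda>k. zeta n ^ k) {..<n}"
  using bij_betw_roots_unity[of n] unfolding bij_betw_def zeta_pow by simp

lemma zeta_pow_eq_1_iff: "n > 0 \<Longrightarrow> zeta n ^ k = 1 \<longleftrightarrow> n dvd k"
  by (rule power_eq_1_iff_dvd[OF zeta_pow_self inj_on_zeta_pow])

lemma zeta_pow_mult_div:
  assumes "d dvd n" "n > 0"
  shows "zeta n ^ (j * (n div d)) = zeta d ^ j"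
proof -
  have "real (j * (n div d)) / real n = real j / real d"
    using assms by (auto simp: real_of_nat_div field_simps elim!: dvdE)
  then show ?thesis
    unfolding zeta_pow by (metis times_divide_eq_right)
qed

section \<open>Circulant matrices and integrality of norms\<close>

definition dft_mat :: "nat \<Rightarrow> complex mat" where
  "dft_mat n = mat n n (\<lambda>(k, i). zeta n ^ (k * i))"

definition idft_mat :: "nat \<Rightarrow> complex mat" where
  "idft_mat n = mat n n (\<lambda>(i, l). zeta n ^ (i * (n - l)) / of_nat n)"

lemma dft_mat_idft_mat:
  assumes n: "n > 0"
  shows "dft_mat n * idft_mat n = 1\<^sub>m n"
proof (rule eq_matI)
  fix k l
  assume "k < dim_row (1\<^sub>m n)" "l < dim_col (1\<^sub>m n)"
  then have k: "k < n" and l: "l < n" by auto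
  define w where "w = zeta n ^ (k + (n - l))"
  have "w * zeta n ^ l = zeta n ^ (k + n)"
    using l by (simp add: w_def flip: power_add)
  then have w_l: "w * zeta n ^ l = zeta n ^ k"
    by (simp add: power_add zeta_pow_self[OF n])
  have w_n: "w ^ n = 1"
    using zeta_pow_self[OF n] by (metis w_def mult.commute power_mult power_one)
  have w_1: "w = 1 \<longleftrightarrow> k = l"
  proof
    assume "w = 1"
    then show "k = l"
      using w_l inj_onD[OF inj_on_zeta_pow[OF n], of k l] k l by auto
  next
    assume "k = l"
    then show "w = 1"
      using l zeta_pow_self[OF n] by (simp add: w_def)
  qed
  have "(dft_mat n * idft_mat n) $$ (k, l)
      = (\<Sum>i\<in>{0..<n}. zeta n ^ (k * i) * (zeta n ^ (i * (n - l)) / of_nat n))"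
    using k l by (simp add: dft_mat_def idft_mat_def scalar_prod_def)
  also have "\<dots> = (\<Sum>i<n. w ^ i) / of_nat n"
    by (simp add: w_def sum_divide_distrib lessThan_atLeast0 algebra_simps
        flip: power_add power_mult)
  also have "\<dots> = 1\<^sub>m n $$ (k, l)"
    using w_1 w_n sum_powers_root_of_unity[of w n] k l n by auto
  finally show "(dft_mat n * idft_mat n) $$ (k, l) = 1\<^sub>m n $$ (k, l)" .
qed (auto simp: dft_mat_def idft_mat_def)

lemma idft_mat_dft_mat: "n > 0 \<Longrightarrow> idft_mat n * dft_mat n = 1\<^sub>m n"
  by (rule mat_mult_left_right_inverse[OF _ _ dft_mat_idft_mat])
    (auto simp: dft_mat_def idft_mat_def)

text \<open>Column \<open>j\<close> of the circulant matrix holds the coefficients of \<open>g X\<^sup>j\<close>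
  modulo \<open>X\<^sup>n - 1\<close>: it is the matrix of multiplication by \<open>g\<close> on \<open>\<int>[X]/(X\<^sup>n - 1)\<close>,
  which the discrete Fourier transform diagonalises with eigenvalues \<open>g(\<zeta>\<^sup>k)\<close>.\<close>

definition circulant_mat :: "int poly \<Rightarrow> nat \<Rightarrow> int mat" where
  "circulant_mat g n =
     mat n n (\<lambda>(i, j). \<Sum>e\<le>degree g. if (e + j) mod n = i then poly.coeff g e else 0)"

definition circulant_eigen_mat :: "int poly \<Rightarrow> nat \<Rightarrow> complex mat" where
  "circulant_eigen_mat g n =
     mat n n (\<lambda>(k, j). if k = j then poly (of_int_poly g) (zeta n ^ k) else 0)"

lemma dft_mat_circulant_mat:
  assumes n: "n > 0"
  shows "dft_mat n * map_mat of_int (circulant_mat g n) = circulant_eigen_mat g n * dft_mat n"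
proof (rule eq_matI)
  fix k j
  assume "k < dim_row (circulant_eigen_mat g n * dft_mat n)"
    "j < dim_col (circulant_eigen_mat g n * dft_mat n)"
  then have k: "k < n" and j: "j < n"
    by (auto simp: circulant_eigen_mat_def dft_mat_def)
  have shift: "zeta n ^ (k * ((e + j) mod n)) = zeta n ^ (k * j) * (zeta n ^ k) ^ e" for e
  proof -
    have "zeta n ^ (k * ((e + j) mod n)) = (zeta n ^ ((e + j) mod n)) ^ k"
      by (metis mult.commute power_mult)
    also have "\<dots> = (zeta n ^ (e + j)) ^ k"
      using power_mod_eq_if_power_eq_1[OF zeta_pow_self[OF n], of "e + j"] by simp
    finally show ?thesis
      by (simp add: power_add algebra_simps flip: power_mult)
  qed
  have "(dft_mat n * map_mat of_int (circulant_mat g n)) $$ (k, j)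
      = (\<Sum>i\<in>{0..<n}. \<Sum>e\<le>degree g.
           if (e + j) mod n = i then zeta n ^ (k * i) * of_int (poly.coeff g e) else 0)"
    using k j by (auto simp: dft_mat_def circulant_mat_def scalar_prod_def sum_distrib_left
        intro!: sum.cong)
  also have "\<dots> = (\<Sum>e\<le>degree g. zeta n ^ (k * ((e + j) mod n)) * of_int (poly.coeff g e))"
    using n by (subst sum.swap) (simp add: sum.delta)
  also have "\<dots> = poly (of_int_poly g) (zeta n ^ k) * zeta n ^ (k * j)"
    by (simp add: shift poly_altdef of_int_hom.degree_map_poly_hom sum_distrib_left
        algebra_simps)
  also have "\<dots> = (\<Sum>i\<in>{0..<n}.
      if k = i then poly (of_int_poly g) (zeta n ^ i) * zeta n ^ (i * j) else 0)"
    using k by (simp add: sum.delta')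
  also have "\<dots> = (\<Sum>i\<in>{0..<n}.
      (if k = i then poly (of_int_poly g) (zeta n ^ k) else 0) * zeta n ^ (i * j))"
    by (intro sum.cong) auto
  also have "\<dots> = (circulant_eigen_mat g n * dft_mat n) $$ (k, j)"
    using k j by (simp add: circulant_eigen_mat_def dft_mat_def scalar_prod_def)
  finally show "(dft_mat n * map_mat of_int (circulant_mat g n)) $$ (k, j)
      = (circulant_eigen_mat g n * dft_mat n) $$ (k, j)" .
qed (auto simp: dft_mat_def circulant_eigen_mat_def circulant_mat_def)

lemma char_poly_circulant_mat:
  assumes n: "n > 0"
  shows "of_int_poly (char_poly (circulant_mat g n))
    = (\<Prod>k<n. [:- poly (of_int_poly g) (zeta n ^ k), 1:])"
proof -
  let ?C = "map_mat (of_int :: int \<Rightarrow> complex) (circulant_mat g n)"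
  and ?D = "circulant_eigen_mat g n"
  have carrier: "?C \<in> carrier_mat n n" "?D \<in> carrier_mat n n"
    "dft_mat n \<in> carrier_mat n n" "idft_mat n \<in> carrier_mat n n"
    by (auto simp: circulant_mat_def circulant_eigen_mat_def dft_mat_def idft_mat_def)
  have "?C = idft_mat n * (dft_mat n * ?C)"
    using carrier idft_mat_dft_mat[OF n] by (simp flip: assoc_mult_mat)
  also have "\<dots> = idft_mat n * ?D * dft_mat n"
    using carrier by (simp add: dft_mat_circulant_mat[OF n] assoc_mult_mat)
  finally have "similar_mat ?C ?D"
    unfolding similar_mat_def
    using similar_mat_witI[OF idft_mat_dft_mat[OF n] dft_mat_idft_mat[OF n]] carrier by blast
  then have "char_poly ?C = char_poly ?D"
    by (rule char_poly_similar)
  also have "\<dots> = (\<Prod>a\<leftarrow>diag_mat ?D. [:- a, 1:])"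
    by (rule char_poly_upper_triangular[OF carrier(2)]) (auto simp: circulant_eigen_mat_def)
  also have "\<dots> = (\<Prod>k<n. [:- poly (of_int_poly g) (zeta n ^ k), 1:])"
    by (simp add: diag_mat_def circulant_eigen_mat_def o_def lessThan_atLeast0
        flip: prod.distinct_set_conv_list)
  finally have "char_poly ?C = (\<Prod>k<n. [:- poly (of_int_poly g) (zeta n ^ k), 1:])" .
  moreover have "char_poly ?C = of_int_poly (char_poly (circulant_mat g n))"
    by (rule of_int_hom.char_poly_hom[of _ n]) (simp add: circulant_mat_def)
  ultimately show ?thesis
    by metis
qed

lemma bij_betw_divisor_coprime_pairs:
  fixes n :: nat
  assumes n: "n > 0"
  shows "bij_betw (\<lambda>(d, j). j * (n div d))
    (SIGMA d:{d. d dvd n}. {j. j < d \<and> coprime j d}) {..<n}"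
proof -
  have left_inverse: "n div gcd (j * (n div d)) n = d \<and> j * (n div d) div gcd (j * (n div d)) n = j"
    if "d dvd n" "coprime j d" for d j
  proof -
    obtain m where nm: "n = d * m"
      using \<open>d dvd n\<close> by (rule dvdE)
    then have "gcd (j * m) n = m"
      using gcd_mult_distrib_nat[of m j d] \<open>coprime j d\<close> by (simp add: mult.commute)
    moreover have "n div d = m" "n div m = d" "m > 0"
      using n nm by simp_all
    ultimately show ?thesis by simp
  qed
  have right_inverse: "k div gcd k n * (n div (n div gcd k n)) = k" for k
  proof -
    define g where "g = gcd k n"
    obtain b where b: "n = g * b"
      unfolding g_def by (meson dvdE gcd_dvd2)
    have "g > 0" using n by (simp add: g_def)
    with b n have "n div (n div g) = g" by simp
    then show ?thesis by (simp add: g_def)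
  qed
  have maps_into: "j * (n div d) < n" if "d dvd n" "j < d" for d j
    using that n by (auto elim!: dvdE)
  have maps_back: "n div gcd k n dvd n \<and> k div gcd k n < n div gcd k n
      \<and> coprime (k div gcd k n) (n div gcd k n)" if k: "k < n" for k
  proof -
    obtain a b where "k = gcd k n * a" "n = gcd k n * b"
      by (meson dvdE gcd_dvd1 gcd_dvd2)
    moreover have "gcd k n > 0" using n by simp
    ultimately have "k div gcd k n < n div gcd k n"
      using k by (metis mult_less_cancel1 nonzero_mult_div_cancel_left not_gr0)
    moreover have "n div gcd k n dvd n"
      by (metis dvd_div_mult_self dvd_triv_left gcd_dvd2)
    ultimately show ?thesis
      using n by (simp add: div_gcd_coprime)
  qed
  show ?thesis
    by (rule bij_betw_byWitness[where f' = "\<lambda>k. (n div gcd k n, k div gcd k n)"])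
      (use left_inverse right_inverse maps_into maps_back in auto)
qed

lemma prod_roots_of_unity_by_order:
  fixes h :: "complex \<Rightarrow> 'b :: comm_monoid_mult"
  assumes n: "n > 0"
  shows "(\<Prod>k<n. h (zeta n ^ k)) = (\<Prod>d | d dvd n. \<Prod>j | j < d \<and> coprime j d. h (zeta d ^ j))"
proof -
  have "(\<Prod>d | d dvd n. \<Prod>j | j < d \<and> coprime j d. h (zeta d ^ j))
      = (\<Prod>(d, j)\<in>(SIGMA d:{d. d dvd n}. {j. j < d \<and> coprime j d}). h (zeta d ^ j))"
    using n by (subst prod.Sigma) auto
  also have "\<dots> = (\<Prod>(d, j)\<in>(SIGMA d:{d. d dvd n}. {j. j < d \<and> coprime j d}).
      h (zeta n ^ (j * (n div d))))"
    using n by (intro prod.cong refl) (auto simp: zeta_pow_mult_div)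
  also have "\<dots> = (\<Prod>k<n. h (zeta n ^ k))"
    using prod.reindex_bij_betw[OF bij_betw_divisor_coprime_pairs[OF n], of "\<lambda>k. h (zeta n ^ k)"]
    by (simp add: case_prod_unfold)
  finally show ?thesis ..
qed

lemma of_int_poly_quotient:
  fixes B C :: "int poly" and X :: "complex poly"
  assumes monic: "lead_coeff B = 1" and eq: "of_int_poly B * X = of_int_poly C"
  shows "\<exists>D. X = of_int_poly D"
proof -
  have B0: "B \<noteq> 0" using monic by auto
  obtain D R where pd: "pseudo_divmod C B = (D, R)" by fastforce
  have C: "C = B * D + R"
    using pseudo_divmod(1)[OF B0 pd] monic by simp
  have R: "R = 0 \<or> degree R < degree B"
    using pseudo_divmod(2)[OF B0 pd] .
  have rem: "of_int_poly B * (X - of_int_poly D) = (of_int_poly R :: complex poly)"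
    using eq unfolding C by (simp add: hom_distribs algebra_simps)
  show ?thesis
  proof (rule ccontr)
    assume "\<nexists>D. X = of_int_poly D"
    then have X0: "X - of_int_poly D \<noteq> 0" by auto
    have B'0: "(of_int_poly B :: complex poly) \<noteq> 0" using B0 by simp
    have "degree (of_int_poly B * (X - of_int_poly D) :: complex poly)
        = degree B + degree (X - of_int_poly D)"
      using B'0 X0 by (simp add: degree_mult_eq)
    then have "degree B \<le> degree R" using rem by simp
    moreover have "R \<noteq> 0" using rem B'0 X0 by auto
    ultimately show False using R by simp
  qed
qed

definition conjugates_poly :: "int poly \<Rightarrow> nat \<Rightarrow> complex poly" where
  "conjugates_poly g n = (\<Prod>k | k < n \<and> coprime k n. [:- poly (of_int_poly g) (zeta n ^ k), 1:])"

lemma lead_coeff_conjugates_poly: "lead_coeff (conjugates_poly g n) = 1"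
  unfolding conjugates_poly_def by (simp add: lead_coeff_prod)

text \<open>The integer characteristic polynomial of the circulant matrix is the product of all
  \<open>conjugates_poly g d\<close> with \<open>d dvd n\<close>; by induction all factors but the last are integral,
  and they are monic, so the last one is integral as well.\<close>

lemma conjugates_poly_int: "n > 0 \<Longrightarrow> \<exists>Q. conjugates_poly g n = of_int_poly Q"
proof (induction n rule: less_induct)
  case (less n)
  define S where "S = {d. d dvd n \<and> d \<noteq> n}"
  have "\<forall>d\<in>S. \<exists>Q. conjugates_poly g d = of_int_poly Q"
  proof
    fix d
    assume "d \<in> S"
    then have "0 < d" "d < n"
      using less.prems by (auto simp: S_def intro: Nat.gr0I dest: dvd_imp_le)
    then show "\<exists>Q. conjugates_poly g d = of_int_poly Q"
      using less.IH by blast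
  qed
  then obtain Q where Q: "\<And>d. d \<in> S \<Longrightarrow> conjugates_poly g d = of_int_poly (Q d)"
    by metis
  have divisors: "{d. d dvd n} = insert n S" "n \<notin> S" "finite S"
    using less.prems by (auto simp: S_def)
  have S_prod: "(\<Prod>d\<in>S. conjugates_poly g d) = of_int_poly (\<Prod>d\<in>S. Q d)"
    using Q by (simp add: hom_distribs)
  have "of_int_poly (char_poly (circulant_mat g n))
      = (\<Prod>d | d dvd n. conjugates_poly g d)"
    using prod_roots_of_unity_by_order[OF less.prems,
        of "\<lambda>z. [:- poly (of_int_poly g) z, 1:]"]
    by (simp add: char_poly_circulant_mat[OF less.prems] conjugates_poly_def)
  also have "\<dots> = of_int_poly (\<Prod>d\<in>S. Q d) * conjugates_poly g n"
    using divisors by (simp add: S_prod mult.commute)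
  finally have eq: "of_int_poly (\<Prod>d\<in>S. Q d) * conjugates_poly g n
      = of_int_poly (char_poly (circulant_mat g n))" ..
  have "lead_coeff (of_int_poly (\<Prod>d\<in>S. Q d) :: complex poly) = 1"
    by (simp flip: S_prod add: lead_coeff_prod lead_coeff_conjugates_poly)
  then have "lead_coeff (\<Prod>d\<in>S. Q d) = 1"
    by simp
  from of_int_poly_quotient[OF this eq] show ?case .
qed

lemma prod_conjugates_int:
  assumes n: "n > 0"
  shows "\<exists>m::int. (\<Prod>k | k < n \<and> coprime k n. poly (of_int_poly g) (zeta n ^ k)) = of_int m"
proof -
  define K where "K = {k. k < n \<and> coprime k n}"
  obtain Q where Q: "conjugates_poly g n = of_int_poly Q"
    using conjugates_poly_int[OF n] by blast
  have "poly (conjugates_poly g n) 0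
      = (-1) ^ card K * (\<Prod>k\<in>K. poly (of_int_poly g) (zeta n ^ k))"
    by (simp add: conjugates_poly_def poly_prod K_def flip: prod_uminus)
  then have "(\<Prod>k\<in>K. poly (of_int_poly g) (zeta n ^ k))
      = (-1) ^ card K * poly (conjugates_poly g n) 0"
    by (simp flip: power_mult_distrib)
  also have "\<dots> = of_int ((-1) ^ card K * poly Q 0)"
    by (simp add: Q of_int_hom.poly_map_poly_0)
  finally show ?thesis
    unfolding K_def by blast
qed

section \<open>The maximal minors of the generator matrix\<close>

lemma minor3_eq_det3_powers:
  "minor3 js z a b c = det3 (\<lambda>i k. ([z ^ a, z ^ b, z ^ c] ! k) ^ (js ! i))"
  by (simp add: minor3_def det3_def Gmat_def mult.commute flip: power_mult)

lemma det3_powers_013: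
  fixes x y z :: "'b :: comm_ring_1"
  shows "det3 (\<lambda>i k. ([x, y, z] ! k) ^ ([0, 1, 3] ! i))
    = (y - x) * (z - x) * (z - y) * (x + y + z)"
proof -
  have "(y * z ^ 3 - z * y ^ 3) - (x * z ^ 3 - z * x ^ 3) + (x * y ^ 3 - y * x ^ 3)
      = (y - x) * (z - x) * (z - y) * (x + y + z)"
    by (simp add: algebra_simps power3_eq_cube)
  then show ?thesis
    by (simp add: det3_def)
qed

lemma det3_powers_023:
  fixes x y z :: "'b :: comm_ring_1"
  shows "det3 (\<lambda>i k. ([x, y, z] ! k) ^ ([0, 2, 3] ! i))
    = (y - x) * (z - x) * (z - y) * (x * y + x * z + y * z)"
proof -
  have "(y ^ 2 * z ^ 3 - z ^ 2 * y ^ 3) - (x ^ 2 * z ^ 3 - z ^ 2 * x ^ 3)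
      + (x ^ 2 * y ^ 3 - y ^ 2 * x ^ 3) = (y - x) * (z - x) * (z - y) * (x * y + x * z + y * z)"
    by (simp add: algebra_simps power3_eq_cube power2_eq_square)
  then show ?thesis
    by (simp add: det3_def)
qed

lemma minor3_swap12: "minor3 js z b a c = - minor3 js z a b c"
  unfolding minor3_def det3_def by (simp add: algebra_simps)

lemma minor3_swap23: "minor3 js z a c b = - minor3 js z a b c"
  unfolding minor3_def det3_def by (simp add: algebra_simps)

lemma minor3_eq_0_if_power_eq: "z ^ a = z ^ b \<Longrightarrow> minor3 js z a b c = 0"
  unfolding minor3_eq_det3_powers det3_def by (simp add: algebra_simps)

lemma minor3_as_poly: "minor3 js z a b c = poly (of_int_poly (minor3 js [:0, 1:] a b c)) z"
  unfolding minor3_def det3_def Gmat_def by (simp add: hom_distribs poly_power)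

lemma prime_three: "prime (3 :: nat)"
proof -
  have "{2..<3 :: nat} = {2}" by auto
  then show ?thesis by (simp add: prime_nat_iff')
qed

lemma sum_three_zeta_powers_ne0:
  assumes n: "n > 0" and n3: "\<not> 3 dvd n" and abc: "a < b" "b < c" "c < n"
  shows "zeta n ^ a + zeta n ^ b + zeta n ^ c \<noteq> 0"
proof
  assume sum0: "zeta n ^ a + zeta n ^ b + zeta n ^ c = 0"
  define u where "u = zeta n ^ (b - a)"
  define v where "v = zeta n ^ (c - a)"
  have "norm u = 1" and norm_v: "norm v = 1"
    by (simp_all add: u_def v_def)
  then have unit: "u * cnj u = 1"
    by (simp add: complex_norm_square[symmetric])
  have "zeta n ^ a * (1 + u + v) = 0"
    using sum0 abc by (simp add: u_def v_def algebra_simps flip: power_add)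
  moreover have "zeta n ^ a \<noteq> 0"
    by (metis norm_zero norm_zeta_pow zero_neq_one)
  ultimately have "1 + u + v = 0"
    by (metis mult_eq_0_iff)
  then have "v = - (1 + u)"
    by (metis add.commute add_eq_0_iff2)
  then have "norm (1 + u) = 1"
    using norm_v by (metis norm_minus_cancel)
  then have "(1 + u) * cnj (1 + u) = 1"
    by (metis complex_norm_square of_real_1 power_one)
  then have "(1 + u) * (1 + cnj u) = 1"
    by simp
  then have "u * ((1 + u) * (1 + cnj u)) = u"
    by simp
  then have "(1 + u) * (u + u * cnj u) = u"
    by (simp add: algebra_simps)
  then have "(1 + u) * (u + 1) = u"
    using unit by simp
  txt \<open>\<open>\<bar>1 + u\<bar> = \<bar>u\<bar> = 1\<close> makes \<open>u\<close> a primitive cube root of unity.\<close>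
  then have "u ^ 2 + u + 1 = 0"
    by (simp add: algebra_simps power2_eq_square)
  then have "(u - 1) * (u ^ 2 + u + 1) = 0"
    by simp
  then have "u ^ 3 = 1"
    by (simp add: algebra_simps power2_eq_square power3_eq_cube)
  then have "zeta n ^ (3 * (b - a)) = 1"
    unfolding u_def by (metis mult.commute power_mult)
  then have "n dvd 3 * (b - a)"
    using zeta_pow_eq_1_iff[OF n] by simp
  moreover have "coprime n 3"
    using n3 prime_imp_coprime[OF prime_three] by (simp add: coprime_commute)
  ultimately have "n dvd b - a"
    by (simp add: coprime_dvd_mult_right_iff)
  then show False
    using abc by (auto dest: dvd_imp_le)
qed

lemma sum_products_three_zeta_powers_ne0:
  assumes "n > 0" "\<not> 3 dvd n" "a < b" "b < c" "c < n"
  shows "zeta n ^ a * zeta n ^ b + zeta n ^ a * zeta n ^ c + zeta n ^ b * zeta n ^ c \<noteq> 0"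
proof -
  let ?X = "zeta n ^ a" and ?Y = "zeta n ^ b" and ?Z = "zeta n ^ c"
  have unit: "cnj (zeta n ^ k) * zeta n ^ k = 1" for k
    by (metis complex_norm_square mult.commute norm_zeta_pow of_real_1 power_one)
  have "?X * ?Y * ?Z * cnj (?X + ?Y + ?Z)
      = ?Y * ?Z * (cnj ?X * ?X) + ?X * ?Z * (cnj ?Y * ?Y) + ?X * ?Y * (cnj ?Z * ?Z)"
    by (simp add: algebra_simps)
  also have "\<dots> = ?Y * ?Z + ?X * ?Z + ?X * ?Y"
    by (simp only: unit mult_1_right)
  also have "\<dots> = ?X * ?Y + ?X * ?Z + ?Y * ?Z"
    by (simp add: algebra_simps)
  finally have "?X * ?Y * ?Z * cnj (?X + ?Y + ?Z) = ?X * ?Y + ?X * ?Z + ?Y * ?Z" .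
  moreover have "?X * ?Y * ?Z \<noteq> 0"
    by (metis mult_eq_0_iff norm_zero norm_zeta_pow zero_neq_one)
  moreover have "cnj (?X + ?Y + ?Z) \<noteq> 0"
    unfolding complex_cnj_zero_iff by (rule sum_three_zeta_powers_ne0[OF assms])
  ultimately show ?thesis
    by (metis mult_eq_0_iff)
qed

lemma minor3_zeta_ne0:
  assumes n: "n > 0" and n3: "\<not> 3 dvd n" and js: "js = [0, 1, 3] \<or> js = [0, 2, 3]"
    and abc: "a < b" "b < c" "c < n"
  shows "minor3 js (zeta n) a b c \<noteq> 0"
proof -
  have "zeta n ^ x \<noteq> zeta n ^ y" if "x < n" "y < n" "x \<noteq> y" for x y
    using inj_onD[OF inj_on_zeta_pow[OF n], of x y] that by auto
  then have vandermonde: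
    "(zeta n ^ b - zeta n ^ a) * (zeta n ^ c - zeta n ^ a) * (zeta n ^ c - zeta n ^ b) \<noteq> 0"
    using abc by auto
  from js show ?thesis
  proof
    assume "js = [0, 1, 3]"
    then show ?thesis
      using vandermonde sum_three_zeta_powers_ne0[OF n n3 abc]
      by (simp only: minor3_eq_det3_powers det3_powers_013) simp
  next
    assume "js = [0, 2, 3]"
    then show ?thesis
      using vandermonde sum_products_three_zeta_powers_ne0[OF n n3 abc]
      by (simp only: minor3_eq_det3_powers det3_powers_023) simp
  qed
qed

section \<open>Codes generated by three rows with nonvanishing minors\<close>

lemma sum_lessThan_3: "(\<Sum>i<3. f (i :: nat)) = f 0 + f 1 + (f 2 :: 'b :: comm_monoid_add)"
  by (simp add: eval_nat_numeral add.assoc)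

lemma det3_kernel_trivial:
  fixes M :: "nat \<Rightarrow> nat \<Rightarrow> 'a :: field"
  assumes d: "det3 M \<noteq> 0"
    and e0: "c0 * M 0 0 + c1 * M 1 0 + c2 * M 2 0 = 0"
    and e1: "c0 * M 0 1 + c1 * M 1 1 + c2 * M 2 1 = 0"
    and e2: "c0 * M 0 2 + c1 * M 1 2 + c2 * M 2 2 = 0"
  shows "c0 = 0 \<and> c1 = 0 \<and> c2 = 0"
proof -
  txt \<open>Cramer's rule: each \<open>c\<^sub>i * det3 M\<close> is a combination of the three equations.\<close>
  have "c0 * det3 M
     = (c0 * M 0 0 + c1 * M 1 0 + c2 * M 2 0) * (M 1 1 * M 2 2 - M 1 2 * M 2 1)
     - (c0 * M 0 1 + c1 * M 1 1 + c2 * M 2 1) * (M 1 0 * M 2 2 - M 1 2 * M 2 0)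
     + (c0 * M 0 2 + c1 * M 1 2 + c2 * M 2 2) * (M 1 0 * M 2 1 - M 1 1 * M 2 0)"
    by (simp add: det3_def algebra_simps)
  moreover have "c1 * det3 M
     = - (c0 * M 0 0 + c1 * M 1 0 + c2 * M 2 0) * (M 0 1 * M 2 2 - M 0 2 * M 2 1)
     + (c0 * M 0 1 + c1 * M 1 1 + c2 * M 2 1) * (M 0 0 * M 2 2 - M 0 2 * M 2 0)
     - (c0 * M 0 2 + c1 * M 1 2 + c2 * M 2 2) * (M 0 0 * M 2 1 - M 0 1 * M 2 0)"
    by (simp add: det3_def algebra_simps)
  moreover have "c2 * det3 M
     = (c0 * M 0 0 + c1 * M 1 0 + c2 * M 2 0) * (M 0 1 * M 1 2 - M 0 2 * M 1 1)
     - (c0 * M 0 1 + c1 * M 1 1 + c2 * M 2 1) * (M 0 0 * M 1 2 - M 0 2 * M 1 0)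
     + (c0 * M 0 2 + c1 * M 1 2 + c2 * M 2 2) * (M 0 0 * M 1 1 - M 0 1 * M 1 0)"
    by (simp add: det3_def algebra_simps)
  ultimately have "c0 * det3 M = 0" "c1 * det3 M = 0" "c2 * det3 M = 0"
    by (simp_all only: e0 e1 e2) simp_all
  with d show ?thesis by simp
qed

lemma sum_fun_apply: "(\<Sum>i\<in>A. f i) x = (\<Sum>i\<in>A. f i x)"
  by (induction A rule: infinite_finite_induct) auto

lemma hweight_le: "hweight n v \<le> n"
  unfolding hweight_def by (rule order.trans[OF card_mono[of "{..<n}"]]) auto

interpretation fvec: vector_space "fscale :: 'a :: field \<Rightarrow> (nat \<Rightarrow> 'a) \<Rightarrow> nat \<Rightarrow> 'a"
  by unfold_locales (auto simp: fscale_def algebra_simps fun_eq_iff)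

lemma equiv_GRS_coeffs:
  fixes s v x :: "nat \<Rightarrow> 'a :: field"
  assumes \<sigma>: "\<sigma> permutes {..<n}"
    and y: "y \<in> (\<lambda>u l. if l < n then s l * u (\<sigma> l) else 0) ` GRS n k x v"
  obtains e where "\<And>l. l < n \<Longrightarrow> y l = s l * v (\<sigma> l) * (\<Sum>i<k. e i * x (\<sigma> l) ^ i)"
    and "\<And>l. \<not> l < n \<Longrightarrow> y l = 0"
proof -
  obtain e where "y = (\<lambda>l. if l < n
      then s l * (if \<sigma> l < n then \<Sum>i<k. e i * (v (\<sigma> l) * x (\<sigma> l) ^ i) else 0) else 0)"
    using y unfolding GRS_def gen_code_def by blast
  moreover have "\<sigma> l < n" if "l < n" for l
    using permutes_in_image[OF \<sigma>] that by simp
  ultimately show ?thesis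
    by (intro that[of e]) (simp_all add: sum_distrib_left algebra_simps)
qed

lemma product_in_span_GRS_square:
  fixes s v x :: "nat \<Rightarrow> 'a :: field"
  assumes \<sigma>: "\<sigma> permutes {..<n}"
    and y: "y \<in> (\<lambda>u l. if l < n then s l * u (\<sigma> l) else 0) ` GRS n k x v"
    and y': "y' \<in> (\<lambda>u l. if l < n then s l * u (\<sigma> l) else 0) ` GRS n k x v"
  shows "(\<lambda>l. y l * y' l) \<in> fvec.span
    ((\<lambda>t l. if l < n then (s l * v (\<sigma> l)) ^ 2 * x (\<sigma> l) ^ t else 0) ` {..<2 * k - 1})"
proof -
  define h where "h t = (\<lambda>l. if l < n then (s l * v (\<sigma> l)) ^ 2 * x (\<sigma> l) ^ t else 0)" for t
  obtain e where e: "\<And>l. l < n \<Longrightarrow> y l = s l * v (\<sigma> l) * (\<Sum>i<k. e i * x (\<sigma> l) ^ i)"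
    and e0: "\<And>l. \<not> l < n \<Longrightarrow> y l = 0"
    using equiv_GRS_coeffs[OF \<sigma> y] by blast
  obtain e' where e': "\<And>l. l < n \<Longrightarrow> y' l = s l * v (\<sigma> l) * (\<Sum>i<k. e' i * x (\<sigma> l) ^ i)"
    using equiv_GRS_coeffs[OF \<sigma> y'] by blast
  have "(\<lambda>l. y l * y' l) = (\<Sum>i<k. \<Sum>i'<k. fscale (e i * e' i') (h (i + i')))"
  proof
    fix l
    show "y l * y' l = (\<Sum>i<k. \<Sum>i'<k. fscale (e i * e' i') (h (i + i'))) l"
      by (cases "l < n")
        (simp_all add: e e' e0 h_def fscale_def sum_fun_apply sum_distrib_left sum_distrib_right
          power_add power2_eq_square algebra_simps)
  qed
  also have "\<dots> \<in> fvec.span (h ` {..<2 * k - 1})"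
    by (intro fvec.span_sum fvec.span_scale fvec.span_base) auto
  finally show ?thesis
    unfolding h_def .
qed

definition square_exponents :: "nat list \<Rightarrow> nat list" where
  "square_exponents js =
     [js!0 + js!0, js!0 + js!1, js!0 + js!2, js!1 + js!1, js!1 + js!2, js!2 + js!2]"

locale nonvanishing_minors =
  fixes w :: "'a :: field" and n :: nat and js :: "nat list"
  assumes three_le: "3 \<le> n" and root: "w ^ n = 1"
    and minor_ne0: "\<And>a b c. a < b \<Longrightarrow> b < c \<Longrightarrow> c < n \<Longrightarrow> minor3 js w a b c \<noteq> 0"
begin

lemma minor_ne0_distinct:
  assumes "a < n" "b < n" "c < n" "a \<noteq> b" "b \<noteq> c" "a \<noteq> c"
  shows "minor3 js w a b c \<noteq> 0"
proof -
  have "a < b \<and> b < c \<or> a < c \<and> c < b \<or> b < a \<and> a < c \<or> b < c \<and> c < a \<or> c < a \<and> a < b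
      \<or> c < b \<and> b < a"
    using assms by linarith
  then show ?thesis
  proof (elim disjE conjE)
    assume "a < c" "c < b"
    then show ?thesis
      using minor_ne0[of a c b] minor3_swap23[of js w a b c] assms by simp
  next
    assume "b < a" "a < c"
    then show ?thesis
      using minor_ne0[of b a c] minor3_swap12[of js w a b c] assms by simp
  next
    assume "b < c" "c < a"
    then show ?thesis
      using minor_ne0[of b c a] minor3_swap12[of js w a b c] minor3_swap23[of js w b a c] assms
      by simp
  next
    assume "c < a" "a < b"
    then show ?thesis
      using minor_ne0[of c a b] minor3_swap23[of js w a b c] minor3_swap12[of js w a c b] assms
      by simp
  next
    assume "c < b" "b < a"
    then show ?thesis
      using minor_ne0[of c b a] minor3_swap12[of js w a b c] minor3_swap23[of js w b a c]
        minor3_swap12[of js w b c a] assms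
      by simp
  qed (use minor_ne0 assms in blast)
qed

lemma inj_on_power: "inj_on (\<lambda>l. w ^ l) {..<n}"
proof (rule inj_onI, rule ccontr)
  fix x y
  assume xy: "x \<in> {..<n}" "y \<in> {..<n}" "w ^ x = w ^ y" "x \<noteq> y"
  define c where "c = (if x \<noteq> 0 \<and> y \<noteq> 0 then 0 else if x \<noteq> 1 \<and> y \<noteq> 1 then 1 else 2 :: nat)"
  have "c < 3" "c \<noteq> x" "c \<noteq> y"
    using xy(4) by (auto simp: c_def)
  then have "minor3 js w x y c \<noteq> 0"
    using minor_ne0_distinct[of x y c] xy three_le by auto
  then show False
    using minor3_eq_0_if_power_eq[OF xy(3)] by simp
qed

lemma power_eq_1_iff: "w ^ k = 1 \<longleftrightarrow> n dvd k"
  using power_eq_1_iff_dvd[OF root inj_on_power] three_le by simp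

definition codeword :: "(nat \<Rightarrow> 'a) \<Rightarrow> nat \<Rightarrow> 'a" where
  "codeword x = (\<lambda>l. if l < n then \<Sum>i<3. x i * w ^ (js ! i * l) else 0)"

lemma gen_code_eq_range_codeword: "gen_code n 3 (\<lambda>i l. w ^ (js ! i * l)) = range codeword"
  by (auto simp: gen_code_def codeword_def)

lemma codeword_coeffs_eq_0:
  assumes "a < n" "b < n" "c < n" "a \<noteq> b" "b \<noteq> c" "a \<noteq> c"
    and "codeword x a = 0" "codeword x b = 0" "codeword x c = 0"
  shows "x 0 = 0 \<and> x 1 = 0 \<and> x 2 = 0"
proof (rule det3_kernel_trivial)
  show "det3 (\<lambda>i k. Gmat js w i ([a, b, c] ! k)) \<noteq> 0"
    using minor_ne0_distinct[OF assms(1-6)] by (simp add: minor3_def)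
qed (use assms in \<open>simp_all add: codeword_def sum_lessThan_3 Gmat_def\<close>)

lemma codeword_diff: "codeword x - codeword y = codeword (\<lambda>i. x i - y i)"
  by (auto simp: codeword_def fun_eq_iff sum_lessThan_3 algebra_simps)

lemma codeword_eq_imp_coeffs_eq:
  assumes "codeword x = codeword y"
  shows "x 0 = y 0 \<and> x 1 = y 1 \<and> x 2 = y 2"
proof -
  have "codeword (\<lambda>i. x i - y i) = 0"
    using assms codeword_diff[of x y] by simp
  then show ?thesis
    using codeword_coeffs_eq_0[of 0 1 2 "\<lambda>i. x i - y i"] three_le by simp
qed

lemma codeword_0: "x 0 = 0 \<Longrightarrow> x 1 = 0 \<Longrightarrow> x 2 = 0 \<Longrightarrow> codeword x = 0"
  by (auto simp: codeword_def fun_eq_iff sum_lessThan_3)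

text \<open>Shifting multiplies the coefficient of row \<open>i\<close> by \<open>w\<^bsup>js!i * (n - 1)\<^esup>\<close>.\<close>

lemma is_cyclic_range_codeword: "is_cyclic n (range codeword)"
  unfolding is_cyclic_def
proof
  fix v
  assume "v \<in> range codeword"
  then obtain x where v: "v = codeword x" by auto
  have "cshift n v = codeword (\<lambda>i. x i * w ^ (js ! i * (n - 1)))"
  proof
    fix l
    show "cshift n v l = codeword (\<lambda>i. x i * w ^ (js ! i * (n - 1))) l"
    proof (cases "l < n")
      case True
      have shift: "w ^ (js ! i * ((l + n - 1) mod n)) = w ^ (js ! i * l) * w ^ (js ! i * (n - 1))"
        for i
      proof -
        have "w ^ (js ! i * ((l + n - 1) mod n)) = (w ^ ((l + n - 1) mod n)) ^ (js ! i)"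
          by (metis mult.commute power_mult)
        also have "\<dots> = (w ^ (l + (n - 1))) ^ (js ! i)"
          using power_mod_eq_if_power_eq_1[OF root, of "l + n - 1"] three_le by simp
        finally show ?thesis
          by (simp add: power_add algebra_simps flip: power_mult)
      qed
      have "cshift n v l = (\<Sum>i<3. x i * w ^ (js ! i * ((l + n - 1) mod n)))"
        using True three_le by (simp add: cshift_def v codeword_def)
      also have "\<dots> = codeword (\<lambda>i. x i * w ^ (js ! i * (n - 1))) l"
        unfolding shift using True by (simp add: codeword_def mult_ac)
      finally show ?thesis .
    qed (simp add: cshift_def codeword_def)
  qed
  then show "cshift n v \<in> range codeword" by simp
qed

definition row :: "nat \<Rightarrow> nat \<Rightarrow> 'a" where
  "row i = codeword (\<lambda>j. if j = i then 1 else 0)"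

lemma row_distinct: "row 0 \<noteq> row 1" "row 0 \<noteq> row 2" "row 1 \<noteq> row 2"
  using codeword_eq_imp_coeffs_eq[of "\<lambda>j. if j = 0 then 1 else 0" "\<lambda>j. if j = 1 then 1 else 0"]
    codeword_eq_imp_coeffs_eq[of "\<lambda>j. if j = 0 then 1 else 0" "\<lambda>j. if j = 2 then 1 else 0"]
    codeword_eq_imp_coeffs_eq[of "\<lambda>j. if j = 1 then 1 else 0" "\<lambda>j. if j = 2 then 1 else 0"]
  by (auto simp: row_def)

lemma codeword_eq_row_comb:
  "codeword x = fscale (x 0) (row 0) + fscale (x 1) (row 1) + fscale (x 2) (row 2)"
  by (auto simp: codeword_def row_def fscale_def fun_eq_iff sum_lessThan_3 algebra_simps)

lemma code_dim_range_codeword: "code_dim (range codeword) = 3"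
  unfolding code_dim_def
proof (rule fvec.dim_unique)
  let ?B = "{row 0, row 1, row 2}"
  show "?B \<subseteq> range codeword"
    by (auto simp: row_def)
  show "range codeword \<subseteq> fvec.span ?B"
  proof
    fix v
    assume "v \<in> range codeword"
    then obtain x where v: "v = codeword x" by auto
    show "v \<in> fvec.span ?B"
      unfolding v codeword_eq_row_comb by (intro fvec.span_add fvec.span_scale fvec.span_base) auto
  qed
  show "\<not> fvec.dependent ?B"
  proof
    assume "fvec.dependent ?B"
    then obtain u where u: "\<exists>v\<in>?B. u v \<noteq> 0" "(\<Sum>v\<in>?B. fscale (u v) v) = 0"
      using fvec.dependent_finite[of ?B] by auto
    have "(\<Sum>v\<in>?B. fscale (u v) v) = codeword (\<lambda>i. u (row i))"
      using row_distinct by (simp add: codeword_eq_row_comb add.assoc)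
    then have "codeword (\<lambda>i. u (row i)) = codeword (\<lambda>i. 0)"
      using u(2) codeword_0[of "\<lambda>i. 0"] by simp
    from codeword_eq_imp_coeffs_eq[OF this] u(1) show False
      by auto
  qed
  show "card ?B = 3"
    using row_distinct by simp
qed

lemma hweight_codeword_ge:
  assumes "codeword x \<noteq> 0"
  shows "n - 2 \<le> hweight n (codeword x)"
proof -
  define Z where "Z = {l. l < n \<and> codeword x l = 0}"
  have "card Z \<le> 2"
  proof (rule ccontr)
    assume "\<not> card Z \<le> 2"
    then have "3 \<le> card Z"
      by simp
    then obtain T where "T \<subseteq> Z" "card T = 3"
      by (metis obtain_subset_with_card_n)
    then obtain a b c where "a \<in> Z" "b \<in> Z" "c \<in> Z" and abc: "a \<noteq> b" "b \<noteq> c" "a \<noteq> c"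
      by (auto simp: card_3_iff)
    then have "a < n" "b < n" "c < n" "codeword x a = 0" "codeword x b = 0" "codeword x c = 0"
      by (auto simp: Z_def)
    then have "x 0 = 0 \<and> x 1 = 0 \<and> x 2 = 0"
      using codeword_coeffs_eq_0 abc by blast
    then show False
      using assms codeword_0 by blast
  qed
  moreover have "{l. l < n \<and> codeword x l \<noteq> 0} = {..<n} - Z" "Z \<subseteq> {..<n}"
    by (auto simp: Z_def)
  then have "hweight n (codeword x) = n - card Z"
    unfolding hweight_def by (simp add: card_Diff_subset finite_subset)
  ultimately show ?thesis by simp
qed

text \<open>Expanding the minor on columns \<open>0, 1, l\<close> along its last column exhibits it as a
  codeword; it vanishes exactly at \<open>l = 0, 1\<close>.\<close>

definition cofactor_coeffs :: "nat \<Rightarrow> 'a" where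
  "cofactor_coeffs i = (if i = 0 then w ^ (js!2) - w ^ (js!1)
     else if i = 1 then w ^ (js!0) - w ^ (js!2) else w ^ (js!1) - w ^ (js!0))"

lemma codeword_cofactor_coeffs: "l < n \<Longrightarrow> codeword cofactor_coeffs l = minor3 js w 0 1 l"
  by (simp add: codeword_def sum_lessThan_3 cofactor_coeffs_def minor3_def det3_def Gmat_def
      algebra_simps)

lemma hweight_codeword_cofactor_coeffs:
  "codeword cofactor_coeffs \<noteq> 0 \<and> hweight n (codeword cofactor_coeffs) = n - 2"
proof -
  have "{l. l < n \<and> codeword cofactor_coeffs l \<noteq> 0} = {2..<n}"
  proof (intro equalityI subsetI)
    fix l
    assume "l \<in> {l. l < n \<and> codeword cofactor_coeffs l \<noteq> 0}"
    then have "l < n" "minor3 js w 0 1 l \<noteq> 0"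
      by (auto simp: codeword_cofactor_coeffs)
    moreover have "minor3 js w 0 1 0 = 0" "minor3 js w 0 1 1 = 0"
      by (simp_all add: minor3_def det3_def Gmat_def algebra_simps)
    ultimately show "l \<in> {2..<n}"
      by (cases "l < 2") (auto simp: less_2_cases_iff)
  next
    fix l
    assume "l \<in> {2..<n}"
    then show "l \<in> {l. l < n \<and> codeword cofactor_coeffs l \<noteq> 0}"
      using minor_ne0[of 0 1 l] by (simp add: codeword_cofactor_coeffs)
  qed
  then have "hweight n (codeword cofactor_coeffs) = n - 2"
    by (simp add: hweight_def)
  moreover have "codeword cofactor_coeffs 2 \<noteq> 0"
    using minor_ne0[of 0 1 2] three_le by (simp add: codeword_cofactor_coeffs)
  then have "codeword cofactor_coeffs \<noteq> 0"
    by auto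
  ultimately show ?thesis
    by simp
qed

lemma is_MDS_range_codeword: "is_MDS n (range codeword)"
proof -
  let ?S = "{hweight n v | v. v \<in> range codeword \<and> v \<noteq> 0}"
  have "Min ?S = n - 2"
  proof (rule Min_eqI)
    show "finite ?S"
      by (rule finite_subset[of _ "{..n}"]) (auto intro: hweight_le)
    show "n - 2 \<le> y" if "y \<in> ?S" for y
      using that hweight_codeword_ge by auto
    show "n - 2 \<in> ?S"
      using hweight_codeword_cofactor_coeffs
      by (intro CollectI exI[of _ "codeword cofactor_coeffs"]) simp
  qed
  then show ?thesis
    unfolding is_MDS_def min_dist_def code_dim_range_codeword using three_le by simp
qed

definition power_vector :: "nat \<Rightarrow> nat \<Rightarrow> 'a" where
  "power_vector e = (\<lambda>l. if l < n then w ^ (e * l) else 0)"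

lemma row_eq_power_vector:
  assumes "i < 3"
  shows "row i = power_vector (js ! i)"
proof -
  have "i = 0 \<or> i = 1 \<or> i = 2"
    using assms by auto
  then show ?thesis
    by (auto simp: row_def codeword_def power_vector_def sum_lessThan_3)
qed

lemma power_vector_mult: "(\<lambda>l. power_vector d l * power_vector e l) = power_vector (d + e)"
  by (auto simp: power_vector_def power_add algebra_simps)

lemma inj_on_power_vector: "inj_on power_vector {..<n}"
proof (rule inj_onI)
  fix d e
  assume de: "d \<in> {..<n}" "e \<in> {..<n}" and "power_vector d = power_vector e"
  then have "power_vector d 1 = power_vector e 1"
    by simp
  then have "w ^ d = w ^ e"
    using three_le by (simp add: power_vector_def)
  then show "d = e"
    using inj_onD[OF inj_on_power _ de] by simp
qed

text \<open>Independence is Vandermonde's argument: a dependency gives a nonzero polynomial of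
  degree below \<open>n\<close> vanishing at the \<open>n\<close> distinct points \<open>w\<^sup>l\<close>.\<close>

lemma independent_power_vectors:
  assumes E: "E \<subseteq> {..<n}"
  shows "\<not> fvec.dependent (power_vector ` E)"
proof
  assume dep: "fvec.dependent (power_vector ` E)"
  have finE: "finite E"
    using E finite_subset by blast
  from dep[unfolded fvec.dependent_finite[OF finite_imageI[OF finE]]]
  obtain u where u: "\<exists>t\<in>power_vector ` E. u t \<noteq> 0"
    "(\<Sum>t\<in>power_vector ` E. fscale (u t) t) = 0"
    by blast
  have inj: "inj_on power_vector E"
    using inj_on_subset[OF inj_on_power_vector E] .
  have sum0: "(\<Sum>e\<in>E. fscale (u (power_vector e)) (power_vector e)) = 0"
    using u(2) by (simp add: sum.reindex[OF inj])
  define q where "q = (\<Sum>e\<in>E. Polynomial.monom (u (power_vector e)) e)"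
  have coeff_q: "poly.coeff q i = (if i \<in> E then u (power_vector i) else 0)" for i
    unfolding q_def coeff_sum using finE by (simp add: sum.delta)
  obtain e0 where "e0 \<in> E" "u (power_vector e0) \<noteq> 0"
    using u(1) by auto
  then have q0: "q \<noteq> 0"
    using coeff_q[of e0] by auto
  have "degree q \<le> n - 1"
    by (rule degree_le) (use E coeff_q in auto)
  have roots: "(\<lambda>l. w ^ l) ` {..<n} \<subseteq> {z. poly q z = 0}"
  proof clarify
    fix l
    assume "l < n"
    then have "poly q (w ^ l) = (\<Sum>e\<in>E. fscale (u (power_vector e)) (power_vector e)) l"
      by (simp add: q_def poly_sum poly_monom sum_fun_apply fscale_def power_vector_def
          mult.commute flip: power_mult)
    then show "poly q (w ^ l) = 0"
      using sum0 by simp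
  qed
  have "card ((\<lambda>l. w ^ l) ` {..<n}) \<le> card {z. poly q z = 0}"
    by (rule card_mono[OF poly_roots_finite[OF q0] roots])
  also have "\<dots> \<le> degree q"
    by (rule card_poly_roots_bound[OF q0])
  finally show False
    using card_image[OF inj_on_power] \<open>degree q \<le> n - 1\<close> three_le by simp
qed

text \<open>Six distinct exponents \<open>js!a + js!b\<close> give six independent products of rows, one more
  than the square of a three-dimensional GRS code can hold.\<close>

lemma not_RS_type_range_codeword:
  assumes sums: "distinct (square_exponents js)" "set (square_exponents js) \<subseteq> {..<n}"
  shows "\<not> RS_type n (range codeword)"
proof
  assume "RS_type n (range codeword)"
  then obtain x v \<sigma> s where \<sigma>: "\<sigma> permutes {..<n}"
    and C: "range codeword = (\<lambda>u l. if l < n then s l * u (\<sigma> l) else 0) ` GRS n 3 x v"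
    unfolding RS_type_def code_equiv_def code_dim_range_codeword by blast
  define H where
    "H = (\<lambda>t l. if l < n then (s l * v (\<sigma> l)) ^ 2 * x (\<sigma> l) ^ t else 0) ` {..<2 * 3 - 1}"
  have "power_vector (js ! a + js ! b) \<in> fvec.span H" if "a < 3" "b < 3" for a b
  proof -
    have "row a \<in> range codeword" "row b \<in> range codeword"
      by (simp_all add: row_def)
    then have "(\<lambda>l. row a l * row b l) \<in> fvec.span H"
      unfolding H_def C by (rule product_in_span_GRS_square[OF \<sigma>])
    then show ?thesis
      using that by (simp add: row_eq_power_vector power_vector_mult)
  qed
  then have "power_vector ` set (square_exponents js) \<subseteq> fvec.span H"
    by (auto simp: square_exponents_def)
  then have "card (power_vector ` set (square_exponents js)) \<le> card H"
    using fvec.independent_span_bound[OF _ independent_power_vectors[OF sums(2)]]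
    by (simp add: H_def)
  also have "\<dots> \<le> 5"
    unfolding H_def using card_image_le[of "{..<5::nat}"] by simp
  finally show False
    using card_image[OF inj_on_subset[OF inj_on_power_vector sums(2)]] distinct_card[OF sums(1)]
    by (simp add: square_exponents_def)
qed

end

section \<open>Reduction modulo a prime of \<open>\<int>[\<zeta>]\<close>\<close>

lemma Zzeta_poly: "poly (of_int_poly g) (zeta n) \<in> Zzeta n"
  unfolding Zzeta_def by blast

lemma Zzeta_poly_zeta_pow: "poly (of_int_poly g) (zeta n ^ k) \<in> Zzeta n"
  using Zzeta_poly[of "g \<circ>\<^sub>p Polynomial.monom 1 k" n]
  by (simp add: of_int_hom.map_poly_pcompose poly_pcompose poly_monom)

lemma Zzeta_of_int: "of_int m \<in> Zzeta n"
  using Zzeta_poly[of "[:m:]" n] by (simp add: of_int_hom.map_poly_pCons_hom)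

lemma Zzeta_zero: "0 \<in> Zzeta n"
  using Zzeta_poly[of 0 n] by simp

lemma Zzeta_zeta: "zeta n \<in> Zzeta n"
  using Zzeta_poly[of "[:0, 1:]" n] by (simp add: of_int_hom.map_poly_pCons_hom)

lemma Zzeta_mult:
  assumes "x \<in> Zzeta n" "y \<in> Zzeta n"
  shows "x * y \<in> Zzeta n"
proof -
  obtain g h where "x = poly (of_int_poly g) (zeta n)" "y = poly (of_int_poly h) (zeta n)"
    using assms by (auto simp: Zzeta_def)
  then show ?thesis
    using Zzeta_poly[of "g * h" n] by (simp add: hom_distribs)
qed

lemma Zzeta_uminus:
  assumes "x \<in> Zzeta n"
  shows "- x \<in> Zzeta n"
proof -
  obtain g where "x = poly (of_int_poly g) (zeta n)"
    using assms by (auto simp: Zzeta_def)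
  then show ?thesis
    using Zzeta_poly[of "- g" n] by (simp add: hom_distribs)
qed

lemma Zzeta_prod: "(\<And>i. i \<in> A \<Longrightarrow> f i \<in> Zzeta n) \<Longrightarrow> prod f A \<in> Zzeta n"
proof (induction A rule: infinite_finite_induct)
  case (insert x F)
  then show ?case by (simp add: Zzeta_mult)
qed (use Zzeta_of_int[of 1 n] in simp_all)

locale Zzeta_hom =
  fixes n :: nat and \<rho> :: "complex \<Rightarrow> 'a :: comm_ring_1"
  assumes hom_1: "\<rho> 1 = 1"
    and hom_add_ball: "\<forall>x\<in>Zzeta n. \<forall>y\<in>Zzeta n. \<rho> (x + y) = \<rho> x + \<rho> y"
    and hom_mult_ball: "\<forall>x\<in>Zzeta n. \<forall>y\<in>Zzeta n. \<rho> (x * y) = \<rho> x * \<rho> y"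
begin

lemma hom_add: "x \<in> Zzeta n \<Longrightarrow> y \<in> Zzeta n \<Longrightarrow> \<rho> (x + y) = \<rho> x + \<rho> y"
  using hom_add_ball by blast

lemma hom_mult: "x \<in> Zzeta n \<Longrightarrow> y \<in> Zzeta n \<Longrightarrow> \<rho> (x * y) = \<rho> x * \<rho> y"
  using hom_mult_ball by blast

lemma hom_0: "\<rho> 0 = 0"
proof -
  have "\<rho> (0 + 0) = \<rho> 0 + \<rho> 0"
    by (rule hom_add[OF Zzeta_zero Zzeta_zero])
  then show ?thesis by simp
qed

lemma hom_uminus:
  assumes "x \<in> Zzeta n"
  shows "\<rho> (- x) = - \<rho> x"
proof -
  have "\<rho> (x + - x) = \<rho> x + \<rho> (- x)"
    using hom_add[OF assms Zzeta_uminus[OF assms]] .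
  then show ?thesis
    by (simp add: hom_0 eq_neg_iff_add_eq_0 add.commute)
qed

lemma hom_of_nat: "\<rho> (of_nat m) = of_nat m"
proof (induction m)
  case (Suc m)
  have "1 \<in> Zzeta n" "of_nat m \<in> Zzeta n"
    using Zzeta_of_int[of 1 n] Zzeta_of_int[of "int m" n] by simp_all
  then have "\<rho> (1 + of_nat m) = 1 + of_nat m"
    using Suc.IH by (simp add: hom_add hom_1)
  then show ?case by simp
qed (simp add: hom_0)

lemma hom_of_int: "\<rho> (of_int m) = of_int m"
proof (cases m)
  case (neg k)
  have "of_nat (Suc k) \<in> Zzeta n"
    using Zzeta_of_int[of "int (Suc k)" n] by simp
  then show ?thesis
    using neg by (simp add: hom_uminus hom_of_nat del: of_nat_Suc)
qed (simp add: hom_of_nat)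

lemma hom_poly: "\<rho> (poly (of_int_poly g) (zeta n)) = poly (of_int_poly g) (\<rho> (zeta n))"
proof (induction g)
  case (pCons a g)
  have "\<rho> (poly (of_int_poly (pCons a g)) (zeta n))
      = \<rho> (of_int a + zeta n * poly (of_int_poly g) (zeta n))"
    by (simp add: of_int_hom.map_poly_pCons_hom)
  also have "\<dots> = of_int a + \<rho> (zeta n) * \<rho> (poly (of_int_poly g) (zeta n))"
    by (simp add: hom_add hom_mult hom_of_int Zzeta_of_int Zzeta_mult Zzeta_zeta Zzeta_poly)
  also have "\<dots> = poly (of_int_poly (pCons a g)) (\<rho> (zeta n))"
    by (simp add: pCons.IH of_int_hom.map_poly_pCons_hom)
  finally show ?case .
qed (simp add: hom_0)

lemma hom_zeta_pow: "\<rho> (zeta n ^ k) = \<rho> (zeta n) ^ k"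
  using hom_poly[of "Polynomial.monom 1 k"] by (simp add: poly_monom)

lemma hom_minor3: "\<rho> (minor3 js (zeta n) a b c) = minor3 js (\<rho> (zeta n)) a b c"
  unfolding minor3_as_poly[of js "zeta n" a b c] minor3_as_poly[of js "\<rho> (zeta n)" a b c]
  by (rule hom_poly)

text \<open>The minor divides its norm in \<open>\<int>[\<zeta>]\<close> and the norm is an integer, so a prime
  whose residue field kills the minor divides the norm.\<close>

lemma reduced_minor3_ne0:
  assumes p: "prime p" "CHAR('a) = p" "p \<notin> P_bad n js"
    and n: "n > 1" and abc: "a < b" "b < c" "c < n"
    and minor_ne0: "minor3 js (zeta n) a b c \<noteq> 0"
  shows "minor3 js (\<rho> (zeta n)) a b c \<noteq> 0"
proof
  assume minor0: "minor3 js (\<rho> (zeta n)) a b c = 0"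
  define K where "K = {k. k < n \<and> coprime k n}"
  have "finite K" "1 \<in> K"
    using n by (auto simp: K_def)
  then have norm: "minor_norm n js a b c
      = minor3 js (zeta n) a b c * (\<Prod>k\<in>K - {1}. minor3 js (zeta n ^ k) a b c)"
    unfolding minor_norm_def K_def[symmetric] by (simp add: prod.remove)
  have conj_mem: "minor3 js (zeta n ^ k) a b c \<in> Zzeta n" for k
    by (simp only: minor3_as_poly[of js "zeta n ^ k"] Zzeta_poly_zeta_pow)
  have "\<rho> (minor_norm n js a b c) = 0"
    using conj_mem[of 1] unfolding norm
    by (simp add: hom_mult conj_mem Zzeta_prod hom_minor3 minor0)
  moreover obtain m where m: "minor_norm n js a b c = of_int m"
    using prod_conjugates_int[of n "minor3 js [:0, 1:] a b c"] n
    unfolding minor_norm_def minor3_as_poly[of js "zeta n ^ _"] by auto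
  ultimately have "(of_int m :: 'a) = 0"
    by (simp add: hom_of_int)
  then have "int p dvd \<bar>m\<bar>"
    using p(2) by (simp add: of_int_eq_0_iff_char_dvd)
  then have "p \<in> P_bad n js"
    unfolding P_bad_def using p(1) abc minor_ne0 m by blast
  with p(3) show False ..
qed

lemma poly_zeta_if_onto:
  assumes "\<rho> ` Zzeta n = UNIV"
  shows "\<exists>g. x = poly (of_int_poly g) (\<rho> (zeta n))"
proof -
  obtain z where "z \<in> Zzeta n" "x = \<rho> z"
    using assms by (metis UNIV_I imageE)
  then show ?thesis
    by (auto simp: Zzeta_def hom_poly)
qed

end

lemma nonvanishing_minors_reduction:
  fixes \<rho> :: "complex \<Rightarrow> 'a :: field"
  assumes "Zzeta_hom n \<rho>" and p: "prime p" "CHAR('a) = p" "p \<notin> P_bad n js"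
    and n: "3 \<le> n" "\<not> 3 dvd n" and js: "js = [0, 1, 3] \<or> js = [0, 2, 3]"
  shows "nonvanishing_minors (\<rho> (zeta n)) n js"
proof -
  interpret Zzeta_hom n \<rho>
    by fact
  show ?thesis
  proof
    show "3 \<le> n"
      by fact
    show "\<rho> (zeta n) ^ n = 1"
      using zeta_pow_self[of n] hom_1 n(1) by (simp flip: hom_zeta_pow)
    show "minor3 js (\<rho> (zeta n)) a b c \<noteq> 0" if "a < b" "b < c" "c < n" for a b c
      using reduced_minor3_ne0[OF p _ that minor3_zeta_ne0[OF _ n(2) js that]] n(1) by simp
  qed
qed

section \<open>The residue field\<close>

lemma CHAR_eq_prime:
  assumes "prime p" "of_nat p = (0 :: 'a :: idom)"
  shows "CHAR('a) = p"
proof -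
  have "CHAR('a) dvd p"
    using assms(2) by (simp add: of_nat_eq_0_iff_char_dvd)
  with assms(1) show ?thesis
    using CHAR_not_1' by (auto simp: prime_nat_iff)
qed

lemma of_nat_power_CHAR:
  assumes "prime CHAR('a :: comm_ring_1)"
  shows "(of_nat m :: 'a) ^ CHAR('a) = of_nat m"
proof (induction m)
  case (Suc m)
  have "(of_nat m + 1 :: 'a) ^ CHAR('a) = of_nat m ^ CHAR('a) + 1 ^ CHAR('a)"
    by (rule freshmans_dream[OF assms refl])
  then show ?case
    using Suc by (simp add: add.commute)
qed (use prime_gt_0_nat[OF assms] in \<open>simp add: zero_power\<close>)

lemma of_int_power_CHAR_power:
  assumes "prime CHAR('a :: comm_ring_1)"
  shows "(of_int c :: 'a) ^ (CHAR('a) ^ k) = of_int c"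
proof (induction k)
  case (Suc k)
  have "[c = c mod int CHAR('a)] (mod int CHAR('a))"
    by (simp add: cong_def)
  then have "(of_int c :: 'a) = of_int (c mod int CHAR('a))"
    by (simp only: of_int_eq_iff_cong_CHAR)
  also have "\<dots> = of_nat (nat (c mod int CHAR('a)))"
    using prime_gt_0_nat[OF assms] by simp
  finally have c_nat: "(of_int c :: 'a) = of_nat (nat (c mod int CHAR('a)))" .
  then have "(of_int c :: 'a) ^ CHAR('a) = of_int c"
    by (simp only: c_nat of_nat_power_CHAR[OF assms])
  with Suc show ?case
    by (simp add: power_mult)
qed simp

lemma poly_power_CHAR_power:
  fixes h :: "'a :: comm_ring_1 poly"
  assumes "prime CHAR('a)" and coeffs: "\<And>i. poly.coeff h i ^ (CHAR('a) ^ k) = poly.coeff h i"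
  shows "poly h (x ^ (CHAR('a) ^ k)) = poly h x ^ (CHAR('a) ^ k)"
proof -
  have "poly h (x ^ (CHAR('a) ^ k)) = (\<Sum>i\<le>degree h. poly.coeff h i * (x ^ (CHAR('a) ^ k)) ^ i)"
    by (simp add: poly_altdef)
  also have "\<dots> = (\<Sum>i\<le>degree h. (poly.coeff h i * x ^ i) ^ (CHAR('a) ^ k))"
  proof (intro sum.cong refl)
    fix i
    show "poly.coeff h i * (x ^ (CHAR('a) ^ k)) ^ i = (poly.coeff h i * x ^ i) ^ (CHAR('a) ^ k)"
      using coeffs[of i] by (simp add: power_mult_distrib flip: power_mult) (simp add: mult.commute)
  qed
  also have "\<dots> = poly h x ^ (CHAR('a) ^ k)"
    by (simp add: poly_altdef freshmans_dream_sum'[OF assms(1) refl])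
  finally show ?thesis .
qed

lemma poly_of_int_poly_power_CHAR_power:
  fixes w :: "'a :: comm_ring_1"
  assumes "prime CHAR('a)" "w ^ (CHAR('a) ^ k) = w"
  shows "poly (of_int_poly g) w ^ (CHAR('a) ^ k) = poly (of_int_poly g) w"
proof -
  have "poly (of_int_poly g) (w ^ (CHAR('a) ^ k)) = poly (of_int_poly g) w ^ (CHAR('a) ^ k)"
    by (rule poly_power_CHAR_power[OF assms(1)]) (simp add: of_int_power_CHAR_power[OF assms(1)])
  with assms(2) show ?thesis
    by simp
qed

lemma inj_on_frobenius_orbit:
  fixes w :: "'a :: field"
  assumes order: "\<And>k. w ^ k = 1 \<longleftrightarrow> n dvd k" and cop: "coprime n p"
    and n: "n > 0" and p: "p > 0"
  shows "inj_on (\<lambda>j. w ^ (p ^ j)) {..<ord n p}"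
proof -
  have "w ^ n = 1"
    using order by simp
  then have w0: "w \<noteq> 0"
    using n by (auto simp: zero_power)
  have ne: "w ^ (p ^ i) \<noteq> w ^ (p ^ j)" if ij: "i < j" "j < ord n p" for i j
  proof
    assume eq: "w ^ (p ^ i) = w ^ (p ^ j)"
    have "p ^ i \<le> p ^ j"
      using ij p by (simp add: power_increasing)
    then have "w ^ (p ^ j) = w ^ (p ^ i) * w ^ (p ^ j - p ^ i)"
      by (simp flip: power_add)
    then have "n dvd p ^ j - p ^ i"
      using eq w0 order by simp
    moreover have "p ^ j - p ^ i = p ^ i * (p ^ (j - i) - 1)"
      using ij by (simp add: diff_mult_distrib2 flip: power_add)
    ultimately have "n dvd p ^ (j - i) - 1"
      using cop by (simp add: coprime_dvd_mult_right_iff)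
    then have "[p ^ (j - i) = 1] (mod n)"
      using p by (simp add: cong_altdef_nat)
    then have "ord n p dvd j - i"
      by (simp only: ord_divides)
    then show False
      using ij by (auto dest: dvd_imp_le)
  qed
  show ?thesis
  proof (rule inj_onI, rule ccontr)
    fix i j
    assume "i \<in> {..<ord n p}" "j \<in> {..<ord n p}" "w ^ (p ^ i) = w ^ (p ^ j)" "i \<noteq> j"
    then show False
      using ne[of i j] ne[of j i] by (cases "i < j") auto
  qed
qed

text \<open>The Frobenius conjugates \<open>w\<^bsup>p\<^sup>j\<^esup>\<close>, \<open>j < ord n p\<close>, are distinct roots of any
  prime-field relation among \<open>1, w, \<dots>, w\<^bsup>ord n p - 1\<^esup>\<close>.\<close>

lemma powers_independent_over_prime_field:
  fixes w :: "'a :: field"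
  assumes p: "prime p" "CHAR('a) = p" and cop: "coprime n p"
    and order: "\<And>k. w ^ k = 1 \<longleftrightarrow> n dvd k"
    and rel: "(\<Sum>i<ord n p. of_int (c i) * w ^ i) = (0 :: 'a)"
  shows "\<forall>i<ord n p. (of_int (c i) :: 'a) = 0"
proof (rule ccontr)
  let ?f = "ord n p"
  assume "\<not> (\<forall>i<?f. (of_int (c i) :: 'a) = 0)"
  then obtain i0 where i0: "i0 < ?f" "(of_int (c i0) :: 'a) \<noteq> 0"
    by auto
  define h :: "'a poly" where "h = (\<Sum>i<?f. Polynomial.monom (of_int (c i)) i)"
  have coeff_h: "poly.coeff h i = (if i < ?f then of_int (c i) else 0)" for i
    unfolding h_def coeff_sum by (simp add: sum.delta)
  have "poly.coeff h i0 \<noteq> 0"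
    using i0 by (simp add: coeff_h)
  then have h0: "h \<noteq> 0"
    by auto
  have "degree h \<le> ?f - 1"
    by (rule degree_le) (use coeff_h in auto)
  have pC: "prime CHAR('a)"
    using p by simp
  have roots: "(\<lambda>j. w ^ (p ^ j)) ` {..<?f} \<subseteq> {x. poly h x = 0}"
  proof clarify
    fix j
    have "poly h (w ^ (CHAR('a) ^ j)) = poly h w ^ (CHAR('a) ^ j)"
      by (rule poly_power_CHAR_power[OF pC])
        (use of_int_power_CHAR_power[OF pC] prime_gt_0_nat[OF pC] in \<open>simp add: coeff_h zero_power\<close>)
    moreover have "poly h w = 0"
      using rel by (simp add: h_def poly_sum poly_monom)
    ultimately show "poly h (w ^ (p ^ j)) = 0"
      using p prime_gt_0_nat by simp
  qed
  have "n \<noteq> 0"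
  proof
    assume "n = 0"
    then show False
      using cop p by simp
  qed
  then have "?f = card ((\<lambda>j. w ^ (p ^ j)) ` {..<?f})"
    using card_image[OF inj_on_frobenius_orbit[OF order cop]] p by (simp add: prime_gt_0_nat)
  also have "\<dots> \<le> card {x. poly h x = 0}"
    by (rule card_mono[OF poly_roots_finite[OF h0] roots])
  also have "\<dots> \<le> degree h"
    by (rule card_poly_roots_bound[OF h0])
  finally have "?f \<le> degree h" .
  moreover have "?f > 0"
    using cop by (simp add: ord_eq_0)
  ultimately show False
    using \<open>degree h \<le> ?f - 1\<close> by arith
qed

lemma finite_card_UNIV_le_if_power_eq_self:
  assumes q: "q \<ge> 2" and fix_q: "\<And>x :: 'a :: idom. x ^ q = x"
  shows "finite (UNIV :: 'a set) \<and> card (UNIV :: 'a set) \<le> q"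
proof -
  define Q :: "'a poly" where "Q = Polynomial.monom 1 q - [:0, 1:]"
  have "poly.coeff [:0, 1 :: 'a:] q = 0"
    by (rule coeff_eq_0) (use q in simp)
  then have "poly.coeff Q q = 1"
    by (simp add: Q_def)
  then have Q0: "Q \<noteq> 0"
    by auto
  have "degree Q \<le> q"
    unfolding Q_def
    by (rule order.trans[OF degree_diff_le_max]) (use q in \<open>auto simp: degree_monom_eq\<close>)
  moreover have UNIV_eq: "(UNIV :: 'a set) = {x. poly Q x = 0}"
    using fix_q by (auto simp: Q_def poly_monom)
  ultimately show ?thesis
    using poly_roots_finite[OF Q0] card_poly_roots_bound[OF Q0] by simp
qed

lemma card_UNIV_ge_prime_power_ord:
  fixes w :: "'a :: field"
  assumes p: "prime p" "CHAR('a) = p" and cop: "coprime n p"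
    and order: "\<And>k. w ^ k = 1 \<longleftrightarrow> n dvd k" and finite: "finite (UNIV :: 'a set)"
  shows "p ^ ord n p \<le> card (UNIV :: 'a set)"
proof -
  let ?f = "ord n p"
  have "inj_on (\<lambda>c. \<Sum>i<?f. of_nat (c i) * w ^ i) (PiE {..<?f} (\<lambda>_. {..<p}))"
  proof (rule inj_onI)
    fix c c'
    assume c: "c \<in> PiE {..<?f} (\<lambda>_. {..<p})" and c': "c' \<in> PiE {..<?f} (\<lambda>_. {..<p})"
      and eq: "(\<Sum>i<?f. of_nat (c i) * w ^ i) = (\<Sum>i<?f. of_nat (c' i) * w ^ i)"
    have "(\<Sum>i<?f. of_int (int (c i) - int (c' i)) * w ^ i) = (0 :: 'a)"
      using eq by (simp add: algebra_simps sum_subtractf)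
    then have zero: "\<forall>i<?f. (of_int (int (c i) - int (c' i)) :: 'a) = 0"
      by (rule powers_independent_over_prime_field[OF p cop order])
    have "c i = c' i" if i: "i < ?f" for i
    proof (rule ccontr)
      assume "c i \<noteq> c' i"
      moreover have "int p dvd int (c i) - int (c' i)"
        using zero[rule_format, OF i] p(2) by (simp only: of_int_eq_0_iff_char_dvd)
      ultimately have "\<bar>int p\<bar> \<le> \<bar>int (c i) - int (c' i)\<bar>"
        by (intro dvd_imp_le_int) simp_all
      moreover have "c i < p" "c' i < p"
        using c c' i by (auto simp: PiE_def Pi_def)
      ultimately show False
        by linarith
    qed
    then show "c = c'"
      using c c' by (auto intro: PiE_ext)
  qed
  then have "card (PiE {..<?f} (\<lambda>_. {..<p})) \<le> card (UNIV :: 'a set)"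
    by (rule card_inj_on_le[OF _ subset_UNIV finite])
  then show ?thesis
    by (simp add: card_PiE)
qed

lemma card_field_generated_by_root_of_unity:
  fixes w :: "'a :: field"
  assumes p: "prime p" "CHAR('a) = p" and cop: "coprime n p"
    and order: "\<And>k. w ^ k = 1 \<longleftrightarrow> n dvd k"
    and gen: "\<And>x. \<exists>g. x = poly (of_int_poly g) w"
  shows "card (UNIV :: 'a set) = p ^ ord n p"
proof -
  let ?q = "p ^ ord n p"
  have "ord n p > 0" "p \<ge> 2"
    using cop p by (simp_all add: ord_eq_0 prime_ge_2_nat)
  then have q2: "?q \<ge> 2"
    using self_le_power[of p "ord n p"] by simp
  have "[?q = 1] (mod n)"
    by (rule ord)
  then have "n dvd ?q - 1"
    by (rule cong_to_1_nat)
  then have w_q1: "w ^ (?q - 1) = 1"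
    using order by simp
  have "?q - 1 + 1 = ?q"
    using q2 by simp
  then have "w ^ ?q = w ^ (?q - 1 + 1)"
    by (simp only:)
  also have "\<dots> = w"
    by (simp only: power_add power_one_right w_q1 mult_1)
  finally have wq: "w ^ ?q = w" .
  have "x ^ ?q = x" for x :: 'a
    using gen[of x] poly_of_int_poly_power_CHAR_power[of w "ord n p"] wq p by auto
  then have "finite (UNIV :: 'a set) \<and> card (UNIV :: 'a set) \<le> ?q"
    by (rule finite_card_UNIV_le_if_power_eq_self[OF q2])
  then show ?thesis
    using card_UNIV_ge_prime_power_ord[OF p cop order] by simp
qed

theorem mainTheorem6:
  fixes n p :: nat and js :: "nat list" and \<rho> :: "complex \<Rightarrow> 'a::field"
  assumes "n \<ge> 7" and "\<not> 3 dvd n"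
    and "js = [0, 1, 3] \<or> js = [0, 2, 3]"
    and "prime p" and "p \<notin> P_bad n js" and "\<not> p dvd n"
    and hom1: "\<rho> 1 = 1"
    and hom_add: "\<forall>x\<in>Zzeta n. \<forall>y\<in>Zzeta n. \<rho> (x + y) = \<rho> x + \<rho> y"
    and hom_mult: "\<forall>x\<in>Zzeta n. \<forall>y\<in>Zzeta n. \<rho> (x * y) = \<rho> x * \<rho> y"
    and onto: "\<rho> ` Zzeta n = UNIV"
    and over_p: "\<rho> (of_nat p) = 0"
  shows "card (UNIV :: 'a set) = p ^ ord n p
    \<and> is_cyclic n (gen_code n 3 (\<lambda>i l. \<rho> (Gmat js (zeta n) i l)))
    \<and> code_dim (gen_code n 3 (\<lambda>i l. \<rho> (Gmat js (zeta n) i l))) = 3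
    \<and> is_MDS n (gen_code n 3 (\<lambda>i l. \<rho> (Gmat js (zeta n) i l)))
    \<and> \<not> RS_type n (gen_code n 3 (\<lambda>i l. \<rho> (Gmat js (zeta n) i l)))"
proof -
  interpret red: Zzeta_hom n \<rho>
    using hom1 hom_add hom_mult by unfold_locales
  have "of_nat p = (0 :: 'a)"
    using over_p by (simp add: red.hom_of_nat)
  then have char: "CHAR('a) = p"
    by (rule CHAR_eq_prime[OF \<open>prime p\<close>])
  interpret nonvanishing_minors "\<rho> (zeta n)" n js
    by (rule nonvanishing_minors_reduction[OF red.Zzeta_hom_axioms \<open>prime p\<close> char
          \<open>p \<notin> P_bad n js\<close> _ \<open>\<not> 3 dvd n\<close> \<open>js = [0, 1, 3] \<or> js = [0, 2, 3]\<close>])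
      (use \<open>n \<ge> 7\<close> in simp)
  have code: "gen_code n 3 (\<lambda>i l. \<rho> (Gmat js (zeta n) i l)) = range codeword"
    using gen_code_eq_range_codeword by (simp add: Gmat_def red.hom_zeta_pow)
  have "coprime n p"
    using prime_imp_coprime[OF \<open>prime p\<close> \<open>\<not> p dvd n\<close>] by (simp add: coprime_commute)
  then have "card (UNIV :: 'a set) = p ^ ord n p"
    using card_field_generated_by_root_of_unity[OF \<open>prime p\<close> char _ power_eq_1_iff]
      red.poly_zeta_if_onto[OF onto] by blast
  moreover have "distinct (square_exponents js)" "set (square_exponents js) \<subseteq> {..<n}"
    using \<open>js = [0, 1, 3] \<or> js = [0, 2, 3]\<close> \<open>n \<ge> 7\<close> by (auto simp: square_exponents_def)
  ultimately show ?thesis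
    unfolding code
    using is_cyclic_range_codeword code_dim_range_codeword is_MDS_range_codeword
      not_RS_type_range_codeword
    by blast
qed

end
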